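(* Let $Z$ and $E$ be finite groups with $Z$ abelian and $E$ acting on $Z$ by automorphisms. Let $\mathcal I,\mathcal J$ be $Z\rtimes E$-sets, and let $\overline{\mathcal I},\overline{\mathcal J}$ be the $E$-sets of $Z$-orbits in $\mathcal I$ and $\mathcal J$. Let $\overline{\mathfrak J}:\overline{\mathcal I}\to\overline{\mathcal J}$ be an $E$-equivariant map. Assume: (i) for $\mathcal K\in\{\mathcal I,\mathcal J\}$ every $Z$-orbit in $\mathcal K$ contains an element $x$ with $(ZE)_x=Z_xE_x$; (ii) $Z_x=Z_y$ for every $x\in\mathcal I$ with $Z$-orbit $\overline x$ and every $y\in\overline{\mathfrak J}(\overline x)$; (iii) $\overline{\mathfrak J}$ is a bijection. Then $\overline{\mathfrak J}$ lifts to a $Z\rtimes E$-equivariant bijection $\mathfrak J:\mathcal I\to\mathcal J$ (i.e. $\mathfrak J(x)\in\overline{\mathfrak J}(Z.x)$ for all $x$).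
   Context: For a group acting on a set, $Z_x$, $E_x$, $(ZE)_x$ denote stabilizers of $x$ in $Z$, $E$, $Z\rtimes E$. *)

theory Defs
  imports "HOL-Algebra.Algebra"
begin

definition semidirect_prod ::
  "('z, 'a) monoid_scheme \<Rightarrow> ('e, 'b) monoid_scheme \<Rightarrow> ('e \<Rightarrow> 'z \<Rightarrow> 'z) \<Rightarrow> ('z \<times> 'e) monoid"
  where "semidirect_prod Z E phi =
    \<lparr> carrier = carrier Z \<times> carrier E,
      monoid.mult = (\<lambda>(z1, e1) (z2, e2). (z1 \<otimes>\<^bsub>Z\<^esub> phi e1 z2, e1 \<otimes>\<^bsub>E\<^esub> e2)),
      monoid.one = (\<one>\<^bsub>Z\<^esub>, \<one>\<^bsub>E\<^esub>) \<rparr>"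

definition Z_act :: "('e, 'b) monoid_scheme \<Rightarrow> ('z \<times> 'e \<Rightarrow> 'x \<Rightarrow> 'x) \<Rightarrow> 'z \<Rightarrow> 'x \<Rightarrow> 'x"
  where "Z_act E alpha = (\<lambda>z. alpha (z, \<one>\<^bsub>E\<^esub>))"

definition E_act :: "('z, 'a) monoid_scheme \<Rightarrow> ('z \<times> 'e \<Rightarrow> 'x \<Rightarrow> 'x) \<Rightarrow> 'e \<Rightarrow> 'x \<Rightarrow> 'x"
  where "E_act Z alpha = (\<lambda>e. alpha (\<one>\<^bsub>Z\<^esub>, e))"

definition orbit_E_act ::
  "('z, 'a) monoid_scheme \<Rightarrow> ('e, 'b) monoid_scheme \<Rightarrow> 'x set \<Rightarrow> ('z \<times> 'e \<Rightarrow> 'x \<Rightarrow> 'x) \<Rightarrow> 'e \<Rightarrow> 'x set \<Rightarrow> 'x set"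
  where "orbit_E_act Z E K alpha = (\<lambda>e. \<lambda>Ob \<in> orbits Z K (Z_act E alpha). E_act Z alpha e ` Ob)"

definition ZxEx ::
  "('z, 'a) monoid_scheme \<Rightarrow> ('e, 'b) monoid_scheme \<Rightarrow> ('e \<Rightarrow> 'z \<Rightarrow> 'z) \<Rightarrow> ('z \<times> 'e \<Rightarrow> 'x \<Rightarrow> 'x) \<Rightarrow> 'x \<Rightarrow> ('z \<times> 'e) set"
  where "ZxEx Z E phi alpha x =
    ((\<lambda>z. (z, \<one>\<^bsub>E\<^esub>)) ` stabilizer Z (Z_act E alpha) x)
      <#>\<^bsub>semidirect_prod Z E phi\<^esub> ((\<lambda>e. (\<one>\<^bsub>Z\<^esub>, e)) ` stabilizer E (E_act Z alpha) x)"

end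

theory Submission
  imports Defs
begin

text \<open>In each \<open>Z \<rtimes> E\<close>-orbit of \<open>I\<close> choose \<open>x\<close> with \<open>(ZE)\<^sub>x = Z\<^sub>x E\<^sub>x\<close>, and in the
  \<open>Z\<close>-orbit \<open>Jbar(Z.x)\<close> a point \<open>y\<close> with \<open>(ZE)\<^sub>y = Z\<^sub>y E\<^sub>y\<close>. By equivariance of \<open>Jbar\<close>, every
  \<open>e \<in> E\<^sub>x\<close> maps \<open>Z.y\<close> to itself; together with \<open>Z\<^sub>x = Z\<^sub>y\<close> this gives
  \<open>(ZE)\<^sub>x \<subseteq> (ZE)\<^sub>y\<close>, so \<open>g.x \<mapsto> g.y\<close> is a well defined equivariant map on the orbit
  of \<open>x\<close>.  The relation \<open>y \<in> Jbar(Z.x)\<close> is \<open>Z \<rtimes> E\<close>-invariant, so the glued map lifts \<open>Jbar\<close>.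
  It is injective because two points with the same image lie in one \<open>Z\<close>-orbit (\<open>Jbar\<close> is
  injective) and then differ by an element of \<open>Z\<^bsub>f(x)\<^esub> = Z\<^sub>x\<close>; it is surjective because
  \<open>Jbar\<close> is, and the image is \<open>Z\<close>-stable.\<close>

lemma (in group_action) orbit_subset: "x \<in> E \<Longrightarrow> orbit G \<phi> x \<subseteq> E"
  unfolding orbit_def using element_image by blast

lemma (in group_action) orbit_eq:
  assumes "x \<in> E" "y \<in> orbit G \<phi> x" shows "orbit G \<phi> y = orbit G \<phi> x"
proof -
  have y: "y \<in> E" using assms orbit_subset by blast
  then have "x \<in> orbit G \<phi> y" using orbit_sym assms by blast
  then show ?thesis
    using orbit_trans assms y orbit_subset[OF y] orbit_subset[OF assms(1)] by blast
qed

lemma (in group_action) orbits_eq_orbit: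
  assumes "Ob \<in> orbits G E \<phi>" "w \<in> Ob" shows "Ob = orbit G \<phi> w"
  using assms orbit_eq unfolding orbits_def by blast

lemma (in group_action) orbit_in_orbits: "x \<in> E \<Longrightarrow> orbit G \<phi> x \<in> orbits G E \<phi>"
  unfolding orbits_def by blast

lemma (in group_action) orbits_subset: "Ob \<in> orbits G E \<phi> \<Longrightarrow> Ob \<subseteq> E"
  using orbit_subset unfolding orbits_def by blast

lemma action_eq_if_stabilizer_subset:
  fixes G (structure)
  assumes A: "group_action G I alpha" and B: "group_action G J beta"
    and r: "r \<in> I" and t: "t \<in> J"
    and stab: "stabilizer G alpha r \<subseteq> stabilizer G beta t"
    and g: "g \<in> carrier G" and g': "g' \<in> carrier G" and eq: "alpha g r = alpha g' r"
  shows "beta g t = beta g' t"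
proof -
  interpret group G using A group_action.group_hom group_hom.axioms(1) by blast
  define k where "k = inv g \<otimes> g'"
  have k: "k \<in> carrier G" using g g' by (simp add: k_def)
  have "alpha k r = alpha (inv g) (alpha g' r)"
    unfolding k_def using group_action.composition_rule[OF A] g g' r by simp
  also have "\<dots> = r" using eq group_action.orbit_sym_aux[OF A] g r by metis
  finally have "k \<in> stabilizer G alpha r" using k by (simp add: stabilizer_def)
  then have kt: "beta k t = t" using stab by (auto simp: stabilizer_def)
  have "g \<otimes> k = g'" unfolding k_def using g g' by (simp add: m_assoc[symmetric])
  then have "beta g' t = beta g (beta k t)"
    using group_action.composition_rule[OF B] g k t by metis
  then show ?thesis using kt by simp
qed

text \<open>The map \<open>g r \<mapsto> g t\<close> on the orbit of \<open>r\<close>; it is well defined when the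
  stabilizer of \<open>r\<close> fixes \<open>t\<close>.\<close>
definition transport ::
  "('g, 'b) monoid_scheme \<Rightarrow> ('g \<Rightarrow> 'i \<Rightarrow> 'i) \<Rightarrow> ('g \<Rightarrow> 'j \<Rightarrow> 'j) \<Rightarrow> 'i \<Rightarrow> 'j \<Rightarrow> 'i \<Rightarrow> 'j"
  where "transport G alpha beta r t x = beta (SOME g. g \<in> carrier G \<and> alpha g r = x) t"

lemma transport_action:
  assumes A: "group_action G I alpha" and B: "group_action G J beta"
    and r: "r \<in> I" and t: "t \<in> J"
    and stab: "stabilizer G alpha r \<subseteq> stabilizer G beta t"
    and g: "g \<in> carrier G"
  shows "transport G alpha beta r t (alpha g r) = beta g t"
proof -
  let ?g = "SOME h. h \<in> carrier G \<and> alpha h r = alpha g r"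
  have "\<exists>h. h \<in> carrier G \<and> alpha h r = alpha g r" using g by blast
  then have "?g \<in> carrier G \<and> alpha ?g r = alpha g r" by (rule someI_ex)
  then show ?thesis
    unfolding transport_def using action_eq_if_stabilizer_subset[OF A B r t stab] g by blast
qed

lemma transport_action_orbit:
  fixes G (structure)
  assumes A: "group_action G I alpha" and B: "group_action G J beta"
    and r: "r \<in> I" and t: "t \<in> J"
    and stab: "stabilizer G alpha r \<subseteq> stabilizer G beta t"
    and x: "x \<in> orbit G alpha r" and g: "g \<in> carrier G"
  shows "transport G alpha beta r t (alpha g x) = beta g (transport G alpha beta r t x)"
proof -
  interpret group G using A group_action.group_hom group_hom.axioms(1) by blast
  obtain h where h: "h \<in> carrier G" "x = alpha h r" using x by (auto simp: orbit_def)
  have "alpha g x = alpha (g \<otimes> h) r"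
    using group_action.composition_rule[OF A r g h(1)] h(2) by simp
  then show ?thesis
    using transport_action[OF A B r t stab] group_action.composition_rule[OF B t g h(1)] g h
    by simp
qed

lemma (in group_action) orbit_representative_choice:
  assumes "\<And>x. x \<in> E \<Longrightarrow> \<exists>r \<in> orbit G \<phi> x. P r"
  shows "\<exists>rep. (\<forall>x\<in>E. rep x \<in> orbit G \<phi> x \<and> P (rep x))
    \<and> (\<forall>g\<in>carrier G. \<forall>x\<in>E. rep (\<phi> g x) = rep x)"
proof -
  let ?rep = "\<lambda>x. SOME r. r \<in> orbit G \<phi> x \<and> P r"
  have "?rep x \<in> orbit G \<phi> x \<and> P (?rep x)" if "x \<in> E" for x
    using assms[OF that] by (metis (mono_tags, lifting) someI_ex)
  moreover have "?rep (\<phi> g x) = ?rep x" if "g \<in> carrier G" "x \<in> E" for g x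
  proof -
    have "orbit G \<phi> (\<phi> g x) = orbit G \<phi> x"
      using orbit_eq that unfolding orbit_def by blast
    then show ?thesis by simp
  qed
  ultimately show ?thesis by (intro exI[where x = ?rep]) blast
qed

lemma equivariant_map_within_invariant_relation:
  fixes G (structure)
  assumes A: "group_action G I alpha" and B: "group_action G J beta"
    and R_invariant: "\<And>g x y. g \<in> carrier G \<Longrightarrow> (x, y) \<in> R \<Longrightarrow> (alpha g x, beta g y) \<in> R"
    and R_reps: "\<And>x. x \<in> I \<Longrightarrow> \<exists>r \<in> orbit G alpha x. \<exists>t \<in> J. (r, t) \<in> R
                    \<and> stabilizer G alpha r \<subseteq> stabilizer G beta t"
  shows "\<exists>f. (\<forall>x\<in>I. f x \<in> J \<and> (x, f x) \<in> R)
    \<and> (\<forall>g\<in>carrier G. \<forall>x\<in>I. f (alpha g x) = beta g (f x))"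
proof -
  interpret A: group_action G I alpha by (rule A)
  interpret B: group_action G J beta by (rule B)
  define good where "good r t \<longleftrightarrow> t \<in> J \<and> (r, t) \<in> R
    \<and> stabilizer G alpha r \<subseteq> stabilizer G beta t" for r t
  have good_reps: "\<exists>r \<in> orbit G alpha x. \<exists>t. good r t" if "x \<in> I" for x
    using R_reps[OF that] unfolding good_def by blast
  obtain rep where rep: "\<forall>x\<in>I. rep x \<in> orbit G alpha x \<and> (\<exists>t. good (rep x) t)"
    and rep_action: "\<forall>g\<in>carrier G. \<forall>x\<in>I. rep (alpha g x) = rep x"
    using A.orbit_representative_choice[OF good_reps] by blast
  define partner where "partner x = (SOME t. good (rep x) t)" for x
  define f where "f x = transport G alpha beta (rep x) (partner x) x" for x
  have rep_good: "rep x \<in> I" "x \<in> orbit G alpha (rep x)" "partner x \<in> J" "(rep x, partner x) \<in> R"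
    "stabilizer G alpha (rep x) \<subseteq> stabilizer G beta (partner x)"
    if x: "x \<in> I" for x
  proof -
    have "good (rep x) (partner x)"
      unfolding partner_def using rep[rule_format, OF x] by (metis someI_ex)
    moreover have "rep x \<in> I" using A.orbit_subset[OF x] rep[rule_format, OF x] by blast
    ultimately show "rep x \<in> I" "x \<in> orbit G alpha (rep x)" "partner x \<in> J"
      "(rep x, partner x) \<in> R" "stabilizer G alpha (rep x) \<subseteq> stabilizer G beta (partner x)"
      using A.orbit_sym[OF x] rep[rule_format, OF x] unfolding good_def by blast+
  qed
  have "f x \<in> J \<and> (x, f x) \<in> R" if x: "x \<in> I" for x
  proof -
    obtain h where h: "h \<in> carrier G" "x = alpha h (rep x)"
      using rep_good(2)[OF x] by (auto simp: orbit_def)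
    then have "f x = beta h (partner x)"
      using transport_action[OF A B rep_good(1,3,5)[OF x] h(1)] unfolding f_def by simp
    then show ?thesis
      using R_invariant[OF h(1) rep_good(4)[OF x]] B.element_image[OF h(1) rep_good(3)[OF x]] h(2)
      by simp
  qed
  moreover have "f (alpha g x) = beta g (f x)" if g: "g \<in> carrier G" and x: "x \<in> I" for g x
  proof -
    have "f (alpha g x) = transport G alpha beta (rep x) (partner x) (alpha g x)"
      unfolding f_def partner_def using rep_action[rule_format, OF g x] by simp
    also have "\<dots> = beta g (f x)"
      unfolding f_def by (rule transport_action_orbit[OF A B rep_good(1,3,5,2)[OF x] g])
    finally show ?thesis .
  qed
  ultimately show ?thesis by blast
qed

locale semidirect_action =
  fixes Z :: "('z, 'a) monoid_scheme" and E :: "('e, 'b) monoid_scheme"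
    and phi :: "'e \<Rightarrow> 'z \<Rightarrow> 'z" and I :: "'i set" and alpha :: "'z \<times> 'e \<Rightarrow> 'i \<Rightarrow> 'i"
  assumes Z_group: "group Z" and E_group: "group E"
    and phi_action: "group_action E (carrier Z) phi"
    and phi_hom: "\<And>e. e \<in> carrier E \<Longrightarrow> phi e \<in> hom Z Z"
    and action: "group_action (semidirect_prod Z E phi) I alpha"
begin

abbreviation "G \<equiv> semidirect_prod Z E phi"

lemma G_carrier [simp]: "carrier G = carrier Z \<times> carrier E"
  and G_mult [simp]: "(z1, e1) \<otimes>\<^bsub>G\<^esub> (z2, e2) = (z1 \<otimes>\<^bsub>Z\<^esub> phi e1 z2, e1 \<otimes>\<^bsub>E\<^esub> e2)"
  by (simp_all add: semidirect_prod_def)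

lemma one_closed [simp]: "\<one>\<^bsub>Z\<^esub> \<in> carrier Z" "\<one>\<^bsub>E\<^esub> \<in> carrier E"
  using Z_group E_group by (auto simp: group.is_monoid)

lemma phi_one_apply: "z \<in> carrier Z \<Longrightarrow> phi \<one>\<^bsub>E\<^esub> z = z"
  using group_action.id_eq_one[OF phi_action] by (metis restrict_apply')

lemma phi_apply_one: "e \<in> carrier E \<Longrightarrow> phi e \<one>\<^bsub>Z\<^esub> = \<one>\<^bsub>Z\<^esub>"
  using phi_hom Z_group by (meson group_hom.hom_one group_hom.intro group_hom_axioms.intro)

lemma alpha_closed: "g \<in> carrier G \<Longrightarrow> x \<in> I \<Longrightarrow> alpha g x \<in> I"
  using group_action.element_image[OF action] by blast

lemma alpha_pair:
  assumes "z \<in> carrier Z" "e \<in> carrier E" "x \<in> I"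
  shows "alpha (z, e) x = alpha (z, \<one>\<^bsub>E\<^esub>) (alpha (\<one>\<^bsub>Z\<^esub>, e) x)"
proof -
  have "(z, e) = (z, \<one>\<^bsub>E\<^esub>) \<otimes>\<^bsub>G\<^esub> (\<one>\<^bsub>Z\<^esub>, e)"
    using assms phi_apply_one Z_group E_group by (simp add: group.is_monoid)
  then show ?thesis
    using group_action.composition_rule[OF action] assms by (metis G_carrier SigmaI one_closed)
qed

lemma Z_act_group_action: "group_action Z I (Z_act E alpha)"
proof -
  have h: "alpha \<in> hom G (BijGroup I)"
    using action group_action.group_hom group_hom.homh by blast
  have "Z_act E alpha \<in> hom Z (BijGroup I)"
  proof (rule homI)
    fix z assume "z \<in> carrier Z"
    then show "Z_act E alpha z \<in> carrier (BijGroup I)"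
      using h unfolding Z_act_def by (auto simp: hom_def)
  next
    fix z z' assume zz: "z \<in> carrier Z" "z' \<in> carrier Z"
    have "Z_act E alpha (z \<otimes>\<^bsub>Z\<^esub> z') = alpha ((z, \<one>\<^bsub>E\<^esub>) \<otimes>\<^bsub>G\<^esub> (z', \<one>\<^bsub>E\<^esub>))"
      using zz E_group by (simp add: Z_act_def phi_one_apply group.is_monoid)
    also have "\<dots> = alpha (z, \<one>\<^bsub>E\<^esub>) \<otimes>\<^bsub>BijGroup I\<^esub> alpha (z', \<one>\<^bsub>E\<^esub>)"
      by (rule hom_mult[OF h]) (use zz in auto)
    finally show "Z_act E alpha (z \<otimes>\<^bsub>Z\<^esub> z') = Z_act E alpha z \<otimes>\<^bsub>BijGroup I\<^esub> Z_act E alpha z'"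
      by (simp add: Z_act_def)
  qed
  then show ?thesis
    unfolding group_action_def
    using Z_group group_BijGroup by (metis group_hom.intro group_hom_axioms.intro)
qed

lemma Z_orbit_eq: "orbit Z (Z_act E alpha) x = {alpha (z, \<one>\<^bsub>E\<^esub>) x | z. z \<in> carrier Z}"
  by (simp add: orbit_def Z_act_def)

lemma Z_orbit_subset_orbit: "orbit Z (Z_act E alpha) x \<subseteq> orbit G alpha x"
  unfolding orbit_def Z_act_def by fastforce

lemma orbit_E_act_Z_orbit:
  assumes x: "x \<in> I" and e: "e \<in> carrier E"
  shows "orbit_E_act Z E I alpha e (orbit Z (Z_act E alpha) x)
    = orbit Z (Z_act E alpha) (alpha (\<one>\<^bsub>Z\<^esub>, e) x)"
proof -
  have twist: "alpha (\<one>\<^bsub>Z\<^esub>, e) (alpha (z, \<one>\<^bsub>E\<^esub>) x) = alpha (phi e z, \<one>\<^bsub>E\<^esub>) (alpha (\<one>\<^bsub>Z\<^esub>, e) x)"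
    if z: "z \<in> carrier Z" for z
  proof -
    have phi_z: "phi e z \<in> carrier Z"
      using group_action.element_image[OF phi_action] e z by blast
    have "(\<one>\<^bsub>Z\<^esub>, e) \<otimes>\<^bsub>G\<^esub> (z, \<one>\<^bsub>E\<^esub>) = (phi e z, \<one>\<^bsub>E\<^esub>) \<otimes>\<^bsub>G\<^esub> (\<one>\<^bsub>Z\<^esub>, e)"
      using z e phi_z Z_group E_group phi_apply_one by (simp add: group.is_monoid)
    then show ?thesis
      using group_action.composition_rule[OF action] x z e phi_z by (metis G_carrier SigmaI one_closed)
  qed
  have "E_act Z alpha e ` orbit Z (Z_act E alpha) x = orbit Z (Z_act E alpha) (alpha (\<one>\<^bsub>Z\<^esub>, e) x)"
  proof
    show "E_act Z alpha e ` orbit Z (Z_act E alpha) x \<subseteq> orbit Z (Z_act E alpha) (alpha (\<one>\<^bsub>Z\<^esub>, e) x)"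
      unfolding Z_orbit_eq E_act_def using twist group_action.surj_prop[OF phi_action e] by auto
  next
    show "orbit Z (Z_act E alpha) (alpha (\<one>\<^bsub>Z\<^esub>, e) x) \<subseteq> E_act Z alpha e ` orbit Z (Z_act E alpha) x"
    proof
      fix w assume "w \<in> orbit Z (Z_act E alpha) (alpha (\<one>\<^bsub>Z\<^esub>, e) x)"
      then obtain z' where z': "z' \<in> carrier Z" "w = alpha (z', \<one>\<^bsub>E\<^esub>) (alpha (\<one>\<^bsub>Z\<^esub>, e) x)"
        unfolding Z_orbit_eq by blast
      then obtain z where z: "z \<in> carrier Z" "z' = phi e z"
        using group_action.surj_prop[OF phi_action e] by blast
      then have "w = E_act Z alpha e (alpha (z, \<one>\<^bsub>E\<^esub>) x)"
        using twist z' by (simp add: E_act_def)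
      then show "w \<in> E_act Z alpha e ` orbit Z (Z_act E alpha) x"
        unfolding Z_orbit_eq using z by blast
    qed
  qed
  then show ?thesis
    using x by (simp add: orbit_E_act_def orbits_def; blast)
qed

lemma Z_orbit_action:
  assumes x: "x \<in> I" and z: "z \<in> carrier Z" and e: "e \<in> carrier E"
  shows "orbit Z (Z_act E alpha) (alpha (z, e) x)
    = orbit_E_act Z E I alpha e (orbit Z (Z_act E alpha) x)"
proof -
  interpret ZI: group_action Z I "Z_act E alpha" by (rule Z_act_group_action)
  have ex: "alpha (\<one>\<^bsub>Z\<^esub>, e) x \<in> I" using alpha_closed x e by simp
  then have "alpha (z, e) x \<in> orbit Z (Z_act E alpha) (alpha (\<one>\<^bsub>Z\<^esub>, e) x)"
    unfolding Z_orbit_eq using alpha_pair x z e by blast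
  then show ?thesis
    using ZI.orbit_eq[OF ex] orbit_E_act_Z_orbit[OF x e] by simp
qed

lemma ZxEx_memD:
  assumes "p \<in> ZxEx Z E phi alpha x"
  obtains z e where "p = (z, e)" "z \<in> stabilizer Z (Z_act E alpha) x"
    "e \<in> stabilizer E (E_act Z alpha) x"
proof -
  obtain z e where z: "z \<in> stabilizer Z (Z_act E alpha) x" and e: "e \<in> stabilizer E (E_act Z alpha) x"
    and p: "p = (z, \<one>\<^bsub>E\<^esub>) \<otimes>\<^bsub>G\<^esub> (\<one>\<^bsub>Z\<^esub>, e)"
    using assms unfolding ZxEx_def set_mult_def by blast
  have "z \<in> carrier Z" "e \<in> carrier E" using z e by (auto simp: stabilizer_def)
  then have "p = (z, e)" using p phi_apply_one E_group Z_group by (simp add: group.is_monoid)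
  then show ?thesis using that z e by blast
qed

end

lemma semidirect_stabilizer_subset:
  assumes A: "semidirect_action Z E phi I alpha" and B: "semidirect_action Z E phi J beta"
    and x: "x \<in> I" and y: "y \<in> J"
    and x_split: "stabilizer (semidirect_prod Z E phi) alpha x \<subseteq> ZxEx Z E phi alpha x"
    and y_split: "stabilizer (semidirect_prod Z E phi) beta y \<subseteq> ZxEx Z E phi beta y"
    and Z_stab: "stabilizer Z (Z_act E alpha) x \<subseteq> stabilizer Z (Z_act E beta) y"
    and E_stab: "\<And>e. e \<in> stabilizer E (E_act Z alpha) x \<Longrightarrow>
      beta (\<one>\<^bsub>Z\<^esub>, e) y \<in> orbit Z (Z_act E beta) y"
  shows "stabilizer (semidirect_prod Z E phi) alpha x \<subseteq> stabilizer (semidirect_prod Z E phi) beta y"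
proof
  interpret A: semidirect_action Z E phi I alpha by (rule A)
  interpret B: semidirect_action Z E phi J beta by (rule B)
  interpret Z: group Z by (rule A.Z_group)
  fix p assume "p \<in> stabilizer A.G alpha x"
  then obtain z e where p: "p = (z, e)" and zx: "z \<in> stabilizer Z (Z_act E alpha) x"
    and ex: "e \<in> stabilizer E (E_act Z alpha) x"
    using x_split A.ZxEx_memD by blast
  have z: "z \<in> carrier Z" and e: "e \<in> carrier E" using zx ex by (auto simp: stabilizer_def)
  have zy: "beta (z, \<one>\<^bsub>E\<^esub>) y = y" using zx Z_stab by (auto simp: stabilizer_def Z_act_def)
  txt \<open>\<open>e\<close> moves \<open>y\<close> inside its \<open>Z\<close>-orbit, so some \<open>(z'\<inverse>, e)\<close> fixes \<open>y\<close>;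
    splitting it along \<open>Z\<^sub>y E\<^sub>y\<close> shows \<open>e \<in> E\<^sub>y\<close>.\<close>
  obtain z' where z': "z' \<in> carrier Z" "beta (\<one>\<^bsub>Z\<^esub>, e) y = beta (z', \<one>\<^bsub>E\<^esub>) y"
    using E_stab[OF ex] unfolding B.Z_orbit_eq by blast
  have "beta (inv\<^bsub>Z\<^esub> z', e) y = beta (inv\<^bsub>Z\<^esub> z', \<one>\<^bsub>E\<^esub>) (beta (z', \<one>\<^bsub>E\<^esub>) y)"
    using B.alpha_pair[of "inv\<^bsub>Z\<^esub> z'" e y] z' e y by simp
  also have "\<dots> = beta ((inv\<^bsub>Z\<^esub> z', \<one>\<^bsub>E\<^esub>) \<otimes>\<^bsub>B.G\<^esub> (z', \<one>\<^bsub>E\<^esub>)) y"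
    using group_action.composition_rule[OF B.action y, of "(inv\<^bsub>Z\<^esub> z', \<one>\<^bsub>E\<^esub>)" "(z', \<one>\<^bsub>E\<^esub>)"] z'
    by simp
  also have "\<dots> = beta \<one>\<^bsub>B.G\<^esub> y"
    using z' B.phi_one_apply A.E_group by (simp add: semidirect_prod_def group.is_monoid)
  also have "\<dots> = y"
    using group_action.id_eq_one[OF B.action] y by (metis restrict_apply')
  finally have "(inv\<^bsub>Z\<^esub> z', e) \<in> ZxEx Z E phi beta y"
    using y_split z' e by (auto simp: stabilizer_def)
  then have "beta (\<one>\<^bsub>Z\<^esub>, e) y = y"
    by (auto elim: B.ZxEx_memD simp: stabilizer_def E_act_def)
  then have "beta (z, e) y = y" using B.alpha_pair[of z e y] z e y zy by simp
  then show "p \<in> stabilizer B.G beta y" using p z e by (simp add: stabilizer_def)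
qed

locale orbit_lifting =
  A: semidirect_action Z E phi I alpha + B: semidirect_action Z E phi J beta
  for Z :: "('z, 'a) monoid_scheme" and E :: "('e, 'b) monoid_scheme" and phi :: "'e \<Rightarrow> 'z \<Rightarrow> 'z"
    and I :: "'i set" and alpha :: "'z \<times> 'e \<Rightarrow> 'i \<Rightarrow> 'i"
    and J :: "'j set" and beta :: "'z \<times> 'e \<Rightarrow> 'j \<Rightarrow> 'j" +
  fixes Jbar :: "'i set \<Rightarrow> 'j set"
  assumes Jbar_equivariant: "\<And>e Ob. e \<in> carrier E \<Longrightarrow> Ob \<in> orbits Z I (Z_act E alpha) \<Longrightarrow>
      Jbar (orbit_E_act Z E I alpha e Ob) = orbit_E_act Z E J beta e (Jbar Ob)"
    and Jbar_bij: "bij_betw Jbar (orbits Z I (Z_act E alpha)) (orbits Z J (Z_act E beta))"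
    and Z_stabilizer_eq: "\<And>x y. x \<in> I \<Longrightarrow> y \<in> Jbar (orbit Z (Z_act E alpha) x) \<Longrightarrow>
      stabilizer Z (Z_act E alpha) x = stabilizer Z (Z_act E beta) y"
    and I_split: "\<And>Ob. Ob \<in> orbits Z I (Z_act E alpha) \<Longrightarrow>
      \<exists>x\<in>Ob. stabilizer (semidirect_prod Z E phi) alpha x = ZxEx Z E phi alpha x"
    and J_split: "\<And>Ob. Ob \<in> orbits Z J (Z_act E beta) \<Longrightarrow>
      \<exists>y\<in>Ob. stabilizer (semidirect_prod Z E phi) beta y = ZxEx Z E phi beta y"
begin

abbreviation (input) "Zorb_I \<equiv> orbit Z (Z_act E alpha)"
abbreviation (input) "Zorb_J \<equiv> orbit Z (Z_act E beta)"

sublocale ZI: group_action Z I "Z_act E alpha" by (rule A.Z_act_group_action)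
sublocale ZJ: group_action Z J "Z_act E beta" by (rule B.Z_act_group_action)

lemma Jbar_Z_orbit: "x \<in> I \<Longrightarrow> Jbar (Zorb_I x) \<in> orbits Z J (Z_act E beta)"
  using Jbar_bij ZI.orbit_in_orbits by (auto simp: bij_betw_def)

lemma Jbar_Z_orbit_eq:
  assumes "x \<in> I" "y \<in> Jbar (Zorb_I x)"
  shows "Jbar (Zorb_I x) = Zorb_J y" "y \<in> J"
  using ZJ.orbits_eq_orbit ZJ.orbits_subset Jbar_Z_orbit assms by blast+

lemma Jbar_action:
  assumes x: "x \<in> I" and y: "y \<in> Jbar (Zorb_I x)" and g: "g \<in> carrier A.G"
  shows "beta g y \<in> Jbar (Zorb_I (alpha g x))"
proof -
  obtain z e where g_def: "g = (z, e)" and z: "z \<in> carrier Z" and e: "e \<in> carrier E"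
    using g by auto
  have "Jbar (Zorb_I (alpha g x)) = orbit_E_act Z E J beta e (Jbar (Zorb_I x))"
    using A.Z_orbit_action[OF x z e] Jbar_equivariant[OF e ZI.orbit_in_orbits[OF x]] g_def by simp
  also have "\<dots> = Zorb_J (beta g y)"
    using B.Z_orbit_action[OF _ z e] Jbar_Z_orbit_eq[OF x y] g_def by simp
  finally show ?thesis
    using ZJ.orbit_refl B.alpha_closed g Jbar_Z_orbit_eq(2)[OF x y] by simp
qed

lemma split_stabilizer_subset:
  assumes x: "x \<in> I" and y: "y \<in> Jbar (Zorb_I x)"
    and x_split: "stabilizer A.G alpha x \<subseteq> ZxEx Z E phi alpha x"
    and y_split: "stabilizer B.G beta y \<subseteq> ZxEx Z E phi beta y"
  shows "stabilizer A.G alpha x \<subseteq> stabilizer B.G beta y"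
proof (rule semidirect_stabilizer_subset[OF A.semidirect_action_axioms B.semidirect_action_axioms
      x Jbar_Z_orbit_eq(2)[OF x y]])
  fix e assume "e \<in> stabilizer E (E_act Z alpha) x"
  then have e: "e \<in> carrier E" and ex: "alpha (\<one>\<^bsub>Z\<^esub>, e) x = x"
    by (auto simp: stabilizer_def E_act_def)
  show "beta (\<one>\<^bsub>Z\<^esub>, e) y \<in> Zorb_J y"
    using Jbar_action[OF x y, of "(\<one>\<^bsub>Z\<^esub>, e)"] e ex Jbar_Z_orbit_eq[OF x y] by simp
qed (use x_split y_split Z_stabilizer_eq[OF x y] in auto)

lemma equivariant_lift_inj:
  assumes f_equiv: "\<forall>g\<in>carrier A.G. \<forall>x\<in>I. f (alpha g x) = beta g (f x)"
    and f_lifts: "\<forall>x\<in>I. f x \<in> Jbar (Zorb_I x)"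
  shows "inj_on f I"
proof
  fix x1 x2 assume x1: "x1 \<in> I" and x2: "x2 \<in> I" and eq: "f x1 = f x2"
  have "Jbar (Zorb_I x1) = Jbar (Zorb_I x2)"
    using Jbar_Z_orbit_eq(1) f_lifts x1 x2 eq by metis
  then have "Zorb_I x1 = Zorb_I x2"
    using Jbar_bij ZI.orbit_in_orbits x1 x2 by (auto simp: bij_betw_def dest: inj_onD)
  then obtain z where z: "z \<in> carrier Z" and x2_def: "x2 = alpha (z, \<one>\<^bsub>E\<^esub>) x1"
    using ZI.orbit_refl[OF x2] unfolding A.Z_orbit_eq by blast
  txt \<open>\<open>z\<close> fixes \<open>f x1\<close>, hence also \<open>x1\<close> since \<open>Z\<^sub>x\<^sub>1 = Z\<^bsub>f x1\<^esub>\<close>.\<close>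
  have "beta (z, \<one>\<^bsub>E\<^esub>) (f x1) = f x1"
    using f_equiv z x1 x2_def eq by simp
  then have "z \<in> stabilizer Z (Z_act E alpha) x1"
    using Z_stabilizer_eq[OF x1] f_lifts x1 z by (auto simp: stabilizer_def Z_act_def)
  then show "x1 = x2" using x2_def by (simp add: stabilizer_def Z_act_def)
qed

lemma equivariant_lift_surj:
  assumes f_equiv: "\<forall>g\<in>carrier A.G. \<forall>x\<in>I. f (alpha g x) = beta g (f x)"
    and f_lifts: "\<forall>x\<in>I. f x \<in> Jbar (Zorb_I x)"
  shows "f ` I = J"
proof
  show "f ` I \<subseteq> J" using Jbar_Z_orbit_eq(2) f_lifts by blast
next
  show "J \<subseteq> f ` I"
  proof
    fix y assume y: "y \<in> J"
    obtain Ob where "Ob \<in> orbits Z I (Z_act E alpha)" "Jbar Ob = Zorb_J y"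
      using Jbar_bij ZJ.orbit_in_orbits[OF y] unfolding bij_betw_def by (metis imageE)
    then obtain x where x: "x \<in> I" and "Jbar (Zorb_I x) = Zorb_J y"
      unfolding orbits_def by blast
    then obtain z where z: "z \<in> carrier Z" and fx: "f x = beta (z, \<one>\<^bsub>E\<^esub>) y"
      using f_lifts unfolding B.Z_orbit_eq by blast
    interpret G: group A.G using group_action.group_hom[OF A.action] group_hom.axioms(1) by blast
    have zG: "(z, \<one>\<^bsub>E\<^esub>) \<in> carrier A.G" using z by simp
    have "y = beta (inv\<^bsub>A.G\<^esub> (z, \<one>\<^bsub>E\<^esub>)) (f x)"
      using group_action.orbit_sym_aux[OF B.action zG y] fx by simp
    also have "\<dots> = f (alpha (inv\<^bsub>A.G\<^esub> (z, \<one>\<^bsub>E\<^esub>)) x)"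
      using f_equiv G.inv_closed[OF zG] x by metis
    finally show "y \<in> f ` I" using A.alpha_closed zG x by blast
  qed
qed

theorem equivariant_lift_exists:
  "\<exists>f. bij_betw f I J
    \<and> (\<forall>g\<in>carrier A.G. \<forall>x\<in>I. f (alpha g x) = beta g (f x))
    \<and> (\<forall>x\<in>I. f x \<in> Jbar (Zorb_I x))"
proof -
  let ?R = "{(x, y). x \<in> I \<and> y \<in> Jbar (Zorb_I x)}"
  have "\<exists>r \<in> orbit A.G alpha x. \<exists>t \<in> J. (r, t) \<in> ?R
      \<and> stabilizer A.G alpha r \<subseteq> stabilizer B.G beta t" if x: "x \<in> I" for x
  proof -
    obtain r where r: "r \<in> Zorb_I x" "stabilizer A.G alpha r = ZxEx Z E phi alpha r"
      using I_split ZI.orbit_in_orbits[OF x] by blast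
    have rI: "r \<in> I" using r ZI.orbit_subset[OF x] by blast
    obtain t where t: "t \<in> Jbar (Zorb_I r)" "stabilizer B.G beta t = ZxEx Z E phi beta t"
      using J_split Jbar_Z_orbit[OF rI] by blast
    show ?thesis
      using r t rI A.Z_orbit_subset_orbit Jbar_Z_orbit_eq(2)[OF rI] split_stabilizer_subset[OF rI t(1) equalityD1[OF r(2)] equalityD1[OF t(2)]]
      by blast
  qed
  moreover have "(alpha g x, beta g y) \<in> ?R" if "g \<in> carrier A.G" "(x, y) \<in> ?R" for g x y
    using that Jbar_action A.alpha_closed by blast
  ultimately obtain f where f: "\<forall>x\<in>I. f x \<in> J \<and> (x, f x) \<in> ?R"
      "\<forall>g\<in>carrier A.G. \<forall>x\<in>I. f (alpha g x) = beta g (f x)"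
    using equivariant_map_within_invariant_relation[OF A.action B.action, of ?R] by blast
  then have lifts: "\<forall>x\<in>I. f x \<in> Jbar (Zorb_I x)" by blast
  have "bij_betw f I J"
    using equivariant_lift_inj[OF f(2) lifts] equivariant_lift_surj[OF f(2) lifts]
    by (simp add: bij_betw_def)
  then show ?thesis using f(2) lifts by blast
qed

end

theorem lemma2p1:
  fixes Z :: "('z, 'a) monoid_scheme" and E :: "('e, 'b) monoid_scheme"
    and phi :: "'e \<Rightarrow> 'z \<Rightarrow> 'z"
    and I :: "'i set" and J :: "'j set"
    and alpha :: "'z \<times> 'e \<Rightarrow> 'i \<Rightarrow> 'i" and beta :: "'z \<times> 'e \<Rightarrow> 'j \<Rightarrow> 'j"
    and Jbar :: "'i set \<Rightarrow> 'j set"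
  assumes Z_comm: "comm_group Z" and E_grp: "group E"
    and Z_fin: "finite (carrier Z)" and E_fin: "finite (carrier E)"
    and phi_act: "group_action E (carrier Z) phi"
    and phi_aut: "\<And>e. e \<in> carrier E \<Longrightarrow> phi e \<in> hom Z Z"
    and alpha_act: "group_action (semidirect_prod Z E phi) I alpha"
    and beta_act: "group_action (semidirect_prod Z E phi) J beta"
    and Jbar_maps: "\<And>Ob. Ob \<in> orbits Z I (Z_act E alpha) \<Longrightarrow> Jbar Ob \<in> orbits Z J (Z_act E beta)"
    and Jbar_equiv: "\<And>e Ob. e \<in> carrier E \<Longrightarrow> Ob \<in> orbits Z I (Z_act E alpha) \<Longrightarrow>
          Jbar (orbit_E_act Z E I alpha e Ob) = orbit_E_act Z E J beta e (Jbar Ob)"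
    and cond_i_I: "\<And>Ob. Ob \<in> orbits Z I (Z_act E alpha) \<Longrightarrow>
          \<exists>x\<in>Ob. stabilizer (semidirect_prod Z E phi) alpha x = ZxEx Z E phi alpha x"
    and cond_i_J: "\<And>Ob. Ob \<in> orbits Z J (Z_act E beta) \<Longrightarrow>
          \<exists>y\<in>Ob. stabilizer (semidirect_prod Z E phi) beta y = ZxEx Z E phi beta y"
    and cond_ii: "\<And>x y. x \<in> I \<Longrightarrow> y \<in> Jbar (orbit Z (Z_act E alpha) x) \<Longrightarrow>
          stabilizer Z (Z_act E alpha) x = stabilizer Z (Z_act E beta) y"
    and cond_iii: "bij_betw Jbar (orbits Z I (Z_act E alpha)) (orbits Z J (Z_act E beta))"
  shows "\<exists>f. bij_betw f I J
    \<and> (\<forall>g\<in>carrier (semidirect_prod Z E phi). \<forall>x\<in>I. f (alpha g x) = beta g (f x))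
    \<and> (\<forall>x\<in>I. f x \<in> Jbar (orbit Z (Z_act E alpha) x))"
proof -
  have "orbit_lifting Z E phi I alpha J beta Jbar"
    unfolding orbit_lifting_def orbit_lifting_axioms_def semidirect_action_def
    using Z_comm E_grp phi_act phi_aut alpha_act beta_act Jbar_equiv cond_iii cond_ii
      cond_i_I cond_i_J
    by (simp add: comm_group_def)
  then show ?thesis by (rule orbit_lifting.equivariant_lift_exists)
qed

end
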